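(* For every $n\ge1$ there are infinitely many pairwise non-isomorphic tautological algebras.
   Context: Work over $\mathbb{C}$. The Heisenberg group $\mathbb{H}_{2n+1}$ is $\mathbb{W}\times\mathbb{C}$ ($\mathbb{W}$ a $2n$-dimensional space with non-degenerate skew form $\omega$) with law $(w_1,t_1)(w_2,t_2)=(w_1+w_2,t_1+t_2+\tfrac12\omega(w_1,w_2))$; $T=(0,1)$, $\mathbb{I}=\mathbb{C}T$ its center. An $\mathbb{H}_{2n+1}$-structure on $\mathbb{P}V$, $V\cong\mathbb{C}^{2n+2}$, is an effective algebraic action with dense open orbit, whose boundary is a hyperplane $\mathbb{P}V'$. Viewing $\mathbb{H}_{2n+1}\subset\mathbb{P}\mathrm{GL}_{2n+2}(\mathbb{C})$ and with $\pi:\mathrm{GL}_{2n+2}\to\mathbb{P}\mathrm{GL}_{2n+2}$ the projection, the associated algebra $\mathcal{A}$ is the unital associative subalgebra of $\mathrm{Mat}_{2n+2}(\mathbb{C})$ generated by $\pi^{-1}(\mathbb{H}_{2n+1})$. For $o$ in the open orbit let $v=\overline{\mathbb{I}\cdot o}\setminus\mathbb{I}\cdot o$, $\hat v$ a representative, $\widetilde V=V/\mathbb{C}\hat v$; if $T$ fixes $\mathbb{P}V'$ pointwise, the action descends to a $\mathbb{G}_a^{2n}$-structure of $\mathbb{H}_{2n+1}/\mathbb{I}$ on $\mathbb{P}\widetilde V$, called tautological if in suitable coordinates it is $(a_i)\cdot[z_0,\dots,z_{2n}]=[z_0,z_1+a_1z_0,\dots,z_{2n}+a_{2n}z_0]$.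 A tautological algebra is the associated algebra $\mathcal{A}$ of an $\mathbb{H}_{2n+1}$-structure on $\mathbb{P}^{2n+1}$ for which $T$ fixes the boundary pointwise and the induced $\mathbb{G}_a^{2n}$-structure is tautological. Isomorphism means isomorphism of unital associative algebras. *)

theory Defs
  imports Complex_Main "Jordan_Normal_Form.Determinant"
begin

inductive_set polyfun :: "nat \<Rightarrow> ((nat \<Rightarrow> complex) \<Rightarrow> complex) set" for d :: nat where
  pf_const: "(\<lambda>x. c) \<in> polyfun d"
| pf_var: "i < d \<Longrightarrow> (\<lambda>x. x i) \<in> polyfun d"
| pf_add: "p \<in> polyfun d \<Longrightarrow> q \<in> polyfun d \<Longrightarrow> (\<lambda>x. p x + q x) \<in> polyfun d"
| pf_mult: "p \<in> polyfun d \<Longrightarrow> q \<in> polyfun d \<Longrightarrow> (\<lambda>x. p x * q x) \<in> polyfun d"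

definition zariski_closure :: "nat \<Rightarrow> complex vec set \<Rightarrow> complex vec set" where
  "zariski_closure N S = {x \<in> carrier_vec N. \<forall>f \<in> polyfun N.
      (\<forall>y\<in>S. f (\<lambda>i. y $ i) = 0) \<longrightarrow> f (\<lambda>i. x $ i) = 0}"

definition omega :: "nat \<Rightarrow> complex vec \<Rightarrow> complex vec \<Rightarrow> complex" where
  "omega n w1 w2 = (\<Sum>i<n. w1 $ i * w2 $ (n + i) - w1 $ (n + i) * w2 $ i)"

definition heis :: "nat \<Rightarrow> (complex vec \<times> complex) set" where
  "heis n = {(w, t). w \<in> carrier_vec (2 * n)}"

definition heis_mult :: "nat \<Rightarrow> complex vec \<times> complex \<Rightarrow> complex vec \<times> complex \<Rightarrow> complex vec \<times> complex" where
  "heis_mult n g h = (fst g + fst h, snd g + snd h + omega n (fst g) (fst h) / 2)"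

definition heis_one :: "nat \<Rightarrow> complex vec \<times> complex" where
  "heis_one n = (0\<^sub>v (2 * n), 0)"

definition heis_T :: "nat \<Rightarrow> complex vec \<times> complex" where
  "heis_T n = (0\<^sub>v (2 * n), 1)"

definition heis_coords :: "nat \<Rightarrow> complex vec \<times> complex \<Rightarrow> nat \<Rightarrow> complex" where
  "heis_coords n g = (\<lambda>i. if i < 2 * n then fst g $ i else snd g)"

text \<open>An algebraic action H -> PGL_{2n+2} is given by a polynomial lift rho : H -> GL_{2n+2}
  (always exists since H is an affine space), multiplicative up to nonzero scalars.
  The open orbit is the complement of the hyperplane ker l, described on cones in C^{2n+2}.\<close>
definition H_structure :: "nat \<Rightarrow> (complex vec \<times> complex \<Rightarrow> complex mat) \<Rightarrow> complex vec \<Rightarrow> bool" where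
  "H_structure n \<rho> l \<longleftrightarrow>
     (\<forall>g\<in>heis n. \<rho> g \<in> carrier_mat (2*n+2) (2*n+2) \<and> det (\<rho> g) \<noteq> 0) \<and>
     (\<forall>i<2*n+2. \<forall>j<2*n+2. \<exists>p\<in>polyfun (2*n+1). \<forall>g\<in>heis n. \<rho> g $$ (i,j) = p (heis_coords n g)) \<and>
     (\<forall>g\<in>heis n. \<forall>h\<in>heis n. \<exists>c. c \<noteq> 0 \<and> \<rho> (heis_mult n g h) = c \<cdot>\<^sub>m (\<rho> g * \<rho> h)) \<and>
     (\<forall>g\<in>heis n. (\<exists>c. \<rho> g = c \<cdot>\<^sub>m 1\<^sub>m (2*n+2)) \<longrightarrow> g = heis_one n) \<and>
     l \<in> carrier_vec (2*n+2) \<and> l \<noteq> 0\<^sub>v (2*n+2) \<and>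
     (\<exists>x\<in>carrier_vec (2*n+2). x \<noteq> 0\<^sub>v (2*n+2) \<and>
        (\<forall>v\<in>carrier_vec (2*n+2). v \<noteq> 0\<^sub>v (2*n+2) \<longrightarrow>
           ((\<exists>g\<in>heis n. \<exists>c. c \<noteq> 0 \<and> v = c \<cdot>\<^sub>v (\<rho> g *\<^sub>v x)) \<longleftrightarrow> l \<bullet> v \<noteq> 0)))"

text \<open>Cone over the orbit of the centre I = C T through o.\<close>
definition centre_orbit_cone :: "nat \<Rightarrow> (complex vec \<times> complex \<Rightarrow> complex mat) \<Rightarrow> complex vec \<Rightarrow> complex vec set" where
  "centre_orbit_cone n \<rho> pt = {c \<cdot>\<^sub>v (\<rho> (0\<^sub>v (2*n), s) *\<^sub>v pt) | c s. c \<noteq> 0}"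

text \<open>Representatives of the boundary point v of the closure of I.o.\<close>
definition boundary_reps :: "nat \<Rightarrow> (complex vec \<times> complex \<Rightarrow> complex mat) \<Rightarrow> complex vec \<Rightarrow> complex vec set" where
  "boundary_reps n \<rho> pt = {v \<in> zariski_closure (2*n+2) (centre_orbit_cone n \<rho> pt).
       v \<noteq> 0\<^sub>v (2*n+2) \<and> v \<notin> centre_orbit_cone n \<rho> pt}"

definition taut_mat :: "nat \<Rightarrow> complex vec \<Rightarrow> complex mat" where
  "taut_mat n a = mat (2*n+1) (2*n+1)
     (\<lambda>(i,j). if i = j then 1 else if j = 0 \<and> 1 \<le> i then a $ (i - 1) else 0)"

text \<open>The action induced on P(V / C vhat) is tautological: in a basis of V whose first vector
  is vhat, every rho(w,t) preserves C vhat, and its induced action on the quotient equals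
  (up to scalar) the tautological action of L w for a fixed linear isomorphism L : W -> C^{2n}.\<close>
definition induced_tautological :: "nat \<Rightarrow> (complex vec \<times> complex \<Rightarrow> complex mat) \<Rightarrow> complex vec \<Rightarrow> bool" where
  "induced_tautological n \<rho> vh \<longleftrightarrow>
     (\<exists>Q\<in>carrier_mat (2*n+2) (2*n+2). det Q \<noteq> 0 \<and> col Q 0 = vh \<and>
      (\<exists>L\<in>carrier_mat (2*n) (2*n). det L \<noteq> 0 \<and>
        (\<forall>g\<in>heis n. \<exists>M\<in>carrier_mat (2*n+2) (2*n+2). \<exists>c. c \<noteq> 0 \<and> \<rho> g * Q = Q * M \<and>
            (\<forall>i. 1 \<le> i \<and> i < 2*n+2 \<longrightarrow> M $$ (i, 0) = 0) \<and>
            (\<forall>i j. 1 \<le> i \<and> i < 2*n+2 \<and> 1 \<le> j \<and> j < 2*n+2 \<longrightarrow>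
                 M $$ (i, j) = c * taut_mat n (L *\<^sub>v fst g) $$ (i - 1, j - 1)))))"

inductive_set gen_alg :: "nat \<Rightarrow> complex mat set \<Rightarrow> complex mat set" for N G where
  ga_one: "1\<^sub>m N \<in> gen_alg N G"
| ga_gen: "A \<in> G \<Longrightarrow> A \<in> gen_alg N G"
| ga_add: "A \<in> gen_alg N G \<Longrightarrow> B \<in> gen_alg N G \<Longrightarrow> A + B \<in> gen_alg N G"
| ga_mult: "A \<in> gen_alg N G \<Longrightarrow> B \<in> gen_alg N G \<Longrightarrow> A * B \<in> gen_alg N G"
| ga_smult: "A \<in> gen_alg N G \<Longrightarrow> c \<cdot>\<^sub>m A \<in> gen_alg N G"

definition assoc_algebra :: "nat \<Rightarrow> (complex vec \<times> complex \<Rightarrow> complex mat) \<Rightarrow> complex mat set" where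
  "assoc_algebra n \<rho> = gen_alg (2*n+2) {c \<cdot>\<^sub>m \<rho> g | c g. c \<noteq> 0 \<and> g \<in> heis n}"

definition tautological_algebra :: "nat \<Rightarrow> complex mat set \<Rightarrow> bool" where
  "tautological_algebra n A \<longleftrightarrow>
     (\<exists>\<rho> l. H_structure n \<rho> l \<and>
        (\<forall>v\<in>carrier_vec (2*n+2). l \<bullet> v = 0 \<longrightarrow> (\<exists>c. \<rho> (heis_T n) *\<^sub>v v = c \<cdot>\<^sub>v v)) \<and>
        (\<forall>pt\<in>carrier_vec (2*n+2). l \<bullet> pt \<noteq> 0 \<longrightarrow>
           boundary_reps n \<rho> pt \<noteq> {} \<and>
           (\<forall>vh\<in>boundary_reps n \<rho> pt. induced_tautological n \<rho> vh)) \<and>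
        A = assoc_algebra n \<rho>)"

definition alg_iso :: "nat \<Rightarrow> complex mat set \<Rightarrow> complex mat set \<Rightarrow> bool" where
  "alg_iso N A B \<longleftrightarrow> (\<exists>f. bij_betw f A B \<and>
     (\<forall>x\<in>A. \<forall>y\<in>A. f (x + y) = f x + f y \<and> f (x * y) = f x * f y) \<and>
     (\<forall>c. \<forall>x\<in>A. f (c \<cdot>\<^sub>m x) = c \<cdot>\<^sub>m f x) \<and> f (1\<^sub>m N) = 1\<^sub>m N)"

end

(*
  For a in C let A_a be the algebra C e_0 + W + C e_L with unit e_0, in which W W lies in C e_L:
  x y = B_a(x, y) e_L for x, y in W, where B_a(x, y) = a sum_q x_q y_(n+q) + (a - 1) sum_q x_(n+q) y_q.
  Since B_a(x, y) - B_a(y, x) = omega(x, y), the map (w, t) |-> e_0 + w + (t + (a - 1/2) sum_q w_q w_(n+q)) e_L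
  is a homomorphism from H_(2n+1) to the units of A_a, and left multiplication turns it into an
  H_(2n+1)-structure on P(A_a) with open orbit x_0 <> 0.  The centre acts by translations along e_L,
  so every boundary point v is [e_L]; in a basis starting with e_L the induced action is tautological.

  The associated algebra lies in the left multiplications of A_a and contains those of W.  Its elements
  z with z^3 = 0 are those of W + C e_L; e_1 skew-commutes with all of them, e_1 z = a/(a-1) z e_1, and
  e_1 e_(n+1) <> 0.  Conversely any element with these properties has ratio a/(a-1) or (a-1)/a.  This
  isomorphism invariant separates the algebras for a = 2, 3, 4, ...
*)
theory Submission
  imports Defs
begin

lemma sum_lessThan_add_split:
  fixes g :: "nat \<Rightarrow> 'a::comm_monoid_add"
  shows "(\<Sum>j<m + k. g j) = (\<Sum>j<m. g j) + (\<Sum>j<k. g (m + j))"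
proof -
  have "(\<Sum>j<m + k. g j) = (\<Sum>j\<in>{0..<m}. g j) + (\<Sum>j\<in>{m..<m + k}. g j)"
    by (simp add: atLeast0LessThan[symmetric] sum.atLeastLessThan_concat)
  also have "(\<Sum>j\<in>{m..<m + k}. g j) = (\<Sum>j\<in>{0..<k}. g (j + m))"
    using sum.shift_bounds_nat_ivl[of g 0 m k] by (simp add: add.commute)
  finally show ?thesis by (simp add: atLeast0LessThan add.commute)
qed

lemma sum_coordinate_blocks:
  fixes f :: "nat \<Rightarrow> 'a::comm_monoid_add"
  shows "(\<Sum>j\<in>{0..<2*n+2}. f j) = f 0 + (\<Sum>q<n. f (q+1)) + (\<Sum>q<n. f (n+q+1)) + f (2*n+1)"
proof -
  have "(\<Sum>j\<in>{0..<2*n+2}. f j) = f 0 + (\<Sum>j<Suc (n+n). f (Suc j))"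
    by (simp add: atLeast0LessThan mult_2 sum.lessThan_Suc_shift del: sum.lessThan_Suc)
  also have "(\<Sum>j<Suc (n+n). f (Suc j)) = (\<Sum>q<n. f (q+1)) + (\<Sum>q<n. f (n+q+1)) + f (Suc (n+n))"
    by (simp add: sum_lessThan_add_split)
  finally show ?thesis by (simp add: mult_2 add_ac)
qed

lemma mult_mat_vec_unit_vec_index:
  fixes A :: "'a::semiring_1 mat"
  shows "A \<in> carrier_mat m k \<Longrightarrow> i < m \<Longrightarrow> j < k \<Longrightarrow> (A *\<^sub>v unit_vec k j) $ i = A $$ (i,j)"
  by (simp add: carrier_matD)

lemma mat_eqI_mult_vec:
  fixes A B :: "'a::semiring_1 mat"
  assumes A: "A \<in> carrier_mat m k" and B: "B \<in> carrier_mat m k"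
    and eq: "\<And>v. v \<in> carrier_vec k \<Longrightarrow> A *\<^sub>v v = B *\<^sub>v v"
  shows "A = B"
proof (rule eq_matI)
  fix i j assume "i < dim_row B" and "j < dim_col B"
  then show "A $$ (i,j) = B $$ (i,j)"
    using A B eq[of "unit_vec k j"] mult_mat_vec_unit_vec_index[of A m k i j]
      mult_mat_vec_unit_vec_index[of B m k i j] by simp
qed (use A B in auto)

lemma polyfun_cmult: "p \<in> polyfun d \<Longrightarrow> (\<lambda>X. c * p X) \<in> polyfun d"
  using polyfun.pf_mult[OF polyfun.pf_const] by simp

lemma polyfun_if: "p \<in> polyfun d \<Longrightarrow> q \<in> polyfun d \<Longrightarrow> (\<lambda>X. if P then p X else q X) \<in> polyfun d"
  by (cases P) auto

lemma polyfun_sum: "(\<And>q. q \<in> A \<Longrightarrow> p q \<in> polyfun d) \<Longrightarrow> (\<lambda>X. \<Sum>q\<in>A. p q X) \<in> polyfun d"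
proof (induction A rule: infinite_finite_induct)
  case (insert x F)
  then show ?case using polyfun.pf_add[of "p x" d "\<lambda>X. \<Sum>q\<in>F. p q X"] by simp
qed (simp_all add: polyfun.pf_const)

lemma polyfun_cong: "p \<in> polyfun d \<Longrightarrow> (\<And>i. i < d \<Longrightarrow> X i = Y i) \<Longrightarrow> p X = p Y"
  by (induction p rule: polyfun.induct) auto

lemma continuous_on_polyfun_line:
  "p \<in> polyfun d \<Longrightarrow> continuous_on UNIV (\<lambda>e::complex. p (\<lambda>i. e * A i + B i))"
  by (induction p rule: polyfun.induct) (auto intro!: continuous_intros)

lemma polyfun_eq_0_by_continuity:
  assumes p: "p \<in> polyfun d" and zero: "\<And>e. e \<noteq> 0 \<Longrightarrow> p (\<lambda>i. e * A i + B i) = 0"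
  shows "p B = 0"
proof -
  let ?f = "\<lambda>e::complex. p (\<lambda>i. e * A i + B i)"
  have "isCont ?f 0"
    using continuous_on_polyfun_line[OF p, of A B] by (simp add: continuous_on_eq_continuous_at)
  then have "(?f \<longlongrightarrow> ?f 0) (at 0)" by (simp add: isCont_def)
  moreover have "eventually (\<lambda>e. 0 = ?f e) (at 0)"
    using zero by (auto simp: eventually_at_filter)
  then have "(?f \<longlongrightarrow> 0) (at 0)"
    by (rule Lim_transform_eventually[OF tendsto_const])
  ultimately have "?f 0 = 0" using tendsto_unique[OF at_neq_bot] by blast
  then show ?thesis by simp
qed

lemma smult_one_mat: "(1::'a::ring_1) \<cdot>\<^sub>m A = A"
  by (rule eq_matI) auto

section \<open>The algebra \<open>A\<^sub>a\<close>\<close>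

text \<open>Vectors of \<open>C\<^sup>2\<^sup>n\<^sup>+\<^sup>2\<close> are read in \<open>C e\<^sub>0 \<oplus> W \<oplus> C e\<^sub>L\<close> with \<open>L = 2n+1\<close>; \<open>bform\<close> is the form
  \<open>B\<^sub>a\<close> on the \<open>W\<close>-parts and \<open>amult\<close> the product of \<open>A\<^sub>a\<close>.\<close>

definition bform :: "nat \<Rightarrow> complex \<Rightarrow> complex vec \<Rightarrow> complex vec \<Rightarrow> complex" where
  "bform n a x y = a * (\<Sum>q<n. x$(q+1) * y$(n+q+1)) + (a-1) * (\<Sum>q<n. x$(n+q+1) * y$(q+1))"

definition amult :: "nat \<Rightarrow> complex \<Rightarrow> complex vec \<Rightarrow> complex vec \<Rightarrow> complex vec" where
  "amult n a x y = vec (2*n+2) (\<lambda>i. if i = 0 then x$0 * y$0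
      else if i \<le> 2*n then x$0 * y$i + y$0 * x$i
      else x$0 * y$(2*n+1) + y$0 * x$(2*n+1) + bform n a x y)"

definition lmul_entry :: "nat \<Rightarrow> complex \<Rightarrow> (nat \<Rightarrow> complex) \<Rightarrow> nat \<Rightarrow> nat \<Rightarrow> complex" where
  "lmul_entry n a x i j =
    (if i = 0 then (if j = 0 then x 0 else 0)
     else if i \<le> 2*n then (if j = 0 then x i else if j = i then x 0 else 0)
     else (if j = 0 then x (2*n+1) else if j \<le> n then (a-1) * x (n+j)
           else if j \<le> 2*n then a * x (j-n) else x 0))"

definition lmul :: "nat \<Rightarrow> complex \<Rightarrow> complex vec \<Rightarrow> complex mat" where
  "lmul n a x = mat (2*n+2) (2*n+2) (\<lambda>(i,j). lmul_entry n a (\<lambda>m. x$m) i j)"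

lemma lmul_carrier [simp]:
  "lmul n a x \<in> carrier_mat (2*n+2) (2*n+2)"
  "lmul n a x \<in> carrier_mat (Suc (Suc (2*n))) (Suc (Suc (2*n)))"
  "dim_row (lmul n a x) = 2*n+2" "dim_col (lmul n a x) = 2*n+2"
  by (simp_all add: lmul_def)

lemma amult_carrier [simp]:
  "amult n a x y \<in> carrier_vec (2*n+2)" "dim_vec (amult n a x y) = 2*n+2"
  "amult n a x y \<in> carrier_vec (Suc (Suc (2*n)))"
  by (simp_all add: amult_def)

lemma amult_index:
  "i < 2*n+2 \<Longrightarrow> amult n a x y $ i = (if i = 0 then x$0 * y$0
      else if i \<le> 2*n then x$0 * y$i + y$0 * x$i
      else x$0 * y$(2*n+1) + y$0 * x$(2*n+1) + bform n a x y)"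
  by (simp add: amult_def)

lemma amult_nil:
  "x $ 0 = 0 \<Longrightarrow> y $ 0 = 0 \<Longrightarrow> amult n a x y = bform n a x y \<cdot>\<^sub>v unit_vec (2*n+2) (2*n+1)"
  by (rule eq_vecI) (auto simp: amult_index)

lemma lmul_mult_vec:
  assumes y: "y \<in> carrier_vec (2*n+2)"
  shows "lmul n a x *\<^sub>v y = amult n a x y"
proof (rule eq_vecI)
  fix i assume "i < dim_vec (amult n a x y)"
  then have i: "i < 2*n+2" by simp
  let ?L = "lmul_entry n a (\<lambda>m. x$m) i"
  have "(lmul n a x *\<^sub>v y) $ i = (\<Sum>j\<in>{0..<2*n+2}. ?L j * y$j)"
    using i y by (simp add: scalar_prod_def lmul_def row_def)
  also have "\<dots> = amult n a x y $ i"
  proof -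
    consider "i = 0" | "1 \<le> i" "i \<le> 2*n" | "i = 2*n+1" using i by linarith
    then show ?thesis
    proof cases
      case 1
      have "(\<Sum>j\<in>{0..<2*n+2}. ?L j * y$j) = (\<Sum>j\<in>{0..<2*n+2}. if j = 0 then x$0 * y$0 else 0)"
        by (rule sum.cong) (auto simp: lmul_entry_def 1)
      then show ?thesis using 1 by (simp add: amult_index)
    next
      case 2
      have "(\<Sum>j\<in>{0..<2*n+2}. ?L j * y$j)
          = (\<Sum>j\<in>{0..<2*n+2}. (if j = 0 then x$i * y$0 else 0) + (if j = i then x$0 * y$i else 0))"
        by (rule sum.cong) (use 2 in \<open>auto simp: lmul_entry_def\<close>)
      then show ?thesis using 2 i by (simp add: sum.distrib amult_index)
    next
      case 3
      have "(\<Sum>j\<in>{0..<2*n+2}. ?L j * y$j) = x$(2*n+1) * y$0 + (\<Sum>q<n. (a-1) * x$(n+q+1) * y$(q+1))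
          + (\<Sum>q<n. a * x$(q+1) * y$(n+q+1)) + x$0 * y$(2*n+1)"
        unfolding sum_coordinate_blocks by (simp add: lmul_entry_def 3)
      then show ?thesis
        using 3 by (simp add: amult_index bform_def sum_distrib_left mult.assoc)
    qed
  qed
  finally show "(lmul n a x *\<^sub>v y) $ i = amult n a x y $ i" .
qed simp

lemma bform_amult_left: "bform n a (amult n a x y) z = x$0 * bform n a y z + y$0 * bform n a x z"
  by (simp add: bform_def amult_index sum_distrib_left sum.distrib[symmetric] algebra_simps)

lemma bform_amult_right: "bform n a x (amult n a y z) = y$0 * bform n a x z + z$0 * bform n a x y"
  by (simp add: bform_def amult_index sum_distrib_left sum.distrib[symmetric] algebra_simps)

lemma amult_assoc: "amult n a (amult n a x y) z = amult n a x (amult n a y z)"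
  by (rule eq_vecI) (auto simp: amult_index bform_amult_left bform_amult_right algebra_simps)

lemma amult_unit0_right: "x \<in> carrier_vec (2*n+2) \<Longrightarrow> amult n a x (unit_vec (2*n+2) 0) = x"
proof (rule eq_vecI)
  fix i assume "x \<in> carrier_vec (2*n+2)" "i < dim_vec x"
  then show "amult n a x (unit_vec (2*n+2) 0) $ i = x $ i"
    by (cases "i = 2*n+1") (auto simp: amult_index bform_def)
qed auto

lemma lmul_mult:
  assumes y: "y \<in> carrier_vec (2*n+2)"
  shows "lmul n a x * lmul n a y = lmul n a (amult n a x y)"
proof (rule mat_eqI_mult_vec[of _ "2*n+2" "2*n+2"])
  fix v :: "complex vec" assume v: "v \<in> carrier_vec (2*n+2)"
  have "lmul n a x * lmul n a y *\<^sub>v v = lmul n a x *\<^sub>v (lmul n a y *\<^sub>v v)"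
    by (rule assoc_mult_mat_vec[OF lmul_carrier(1) lmul_carrier(1) v])
  also have "\<dots> = lmul n a (amult n a x y) *\<^sub>v v"
    using v by (simp add: lmul_mult_vec lmul_mult_vec[OF amult_carrier(1)] amult_assoc)
  finally show "lmul n a x * lmul n a y *\<^sub>v v = lmul n a (amult n a x y) *\<^sub>v v" .
qed (rule mult_carrier_mat[OF lmul_carrier(1) lmul_carrier(1)], simp)

lemma lmul_add:
  "x \<in> carrier_vec (2*n+2) \<Longrightarrow> y \<in> carrier_vec (2*n+2) \<Longrightarrow> lmul n a x + lmul n a y = lmul n a (x + y)"
  by (rule eq_matI) (auto simp: lmul_def lmul_entry_def algebra_simps)

lemma lmul_smult: "x \<in> carrier_vec (2*n+2) \<Longrightarrow> c \<cdot>\<^sub>m lmul n a x = lmul n a (c \<cdot>\<^sub>v x)"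
  by (rule eq_matI) (auto simp: lmul_def lmul_entry_def algebra_simps)

lemma lmul_unit0: "lmul n a (unit_vec (2*n+2) 0) = 1\<^sub>m (2*n+2)"
  by (rule eq_matI) (auto simp: lmul_def lmul_entry_def)

lemma lmul_inj:
  assumes "x \<in> carrier_vec (2*n+2)" "y \<in> carrier_vec (2*n+2)" "lmul n a x = lmul n a y"
  shows "x = y"
  by (metis assms amult_unit0_right lmul_mult_vec unit_vec_carrier)

section \<open>The representation \<open>\<rho>\<^sub>a\<close>\<close>

definition quad :: "nat \<Rightarrow> complex vec \<Rightarrow> complex" where
  "quad n w = (\<Sum>q<n. w$q * w$(n+q))"

text \<open>The correction term \<open>(a - 1/2) quad w\<close> of the last coordinate turns the cocycle
  \<open>\<omega>/2\<close> of the group law into the form \<open>B\<^sub>a\<close>:\<close>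

lemma quad_add_omega:
  assumes w: "w \<in> carrier_vec (2*n)" and v: "v \<in> carrier_vec (2*n)"
  shows "(a - 1/2) * quad n (w + v) + omega n w v / 2
    = (a - 1/2) * quad n w + (a - 1/2) * quad n v
      + (a * (\<Sum>q<n. w$q * v$(n+q)) + (a-1) * (\<Sum>q<n. w$(n+q) * v$q))"
proof -
  have "quad n (w + v) = (\<Sum>q<n. (w$q + v$q) * (w$(n+q) + v$(n+q)))"
    unfolding quad_def using w v by (intro sum.cong) auto
  then show ?thesis
    unfolding quad_def omega_def
    by (simp add: sum_distrib_left sum_divide_distrib flip: sum.distrib)
      (intro sum.cong refl, simp add: field_simps)
qed

text \<open>\<open>orbit_vec g = \<rho>\<^sub>a(g) e\<^sub>0\<close>, written through \<open>orbit_poly\<close> so that its entries are visibly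
  polynomial in the coordinates of \<open>g\<close>.\<close>

definition orbit_poly :: "nat \<Rightarrow> complex \<Rightarrow> nat \<Rightarrow> (nat \<Rightarrow> complex) \<Rightarrow> complex" where
  "orbit_poly n a m X = (if m = 0 then 1 else if m \<le> 2*n then X (m-1)
     else X (2*n) + (a - 1/2) * (\<Sum>q<n. X q * X (n+q)))"

definition orbit_vec :: "nat \<Rightarrow> complex \<Rightarrow> complex vec \<times> complex \<Rightarrow> complex vec" where
  "orbit_vec n a g = vec (2*n+2) (\<lambda>m. orbit_poly n a m (heis_coords n g))"

definition taut_rep :: "nat \<Rightarrow> complex \<Rightarrow> complex vec \<times> complex \<Rightarrow> complex mat" where
  "taut_rep n a g = lmul n a (orbit_vec n a g)"

lemma orbit_vec_carrier [simp]:
  "orbit_vec n a g \<in> carrier_vec (2*n+2)" "dim_vec (orbit_vec n a g) = 2*n+2"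
  "orbit_vec n a g \<in> carrier_vec (Suc (Suc (2*n)))"
  by (simp_all add: orbit_vec_def)

lemma taut_rep_carrier [simp]:
  "taut_rep n a g \<in> carrier_mat (2*n+2) (2*n+2)"
  "taut_rep n a g \<in> carrier_mat (Suc (Suc (2*n))) (Suc (Suc (2*n)))"
  by (simp_all add: taut_rep_def)

lemma orbit_vec_index:
  "m < 2*n+2 \<Longrightarrow> orbit_vec n a g $ m = (if m = 0 then 1 else if m \<le> 2*n then fst g $ (m-1)
     else snd g + (a - 1/2) * quad n (fst g))"
  by (auto simp: orbit_vec_def orbit_poly_def heis_coords_def quad_def)

lemma orbit_vec_mult:
  assumes g: "g \<in> heis n" and h: "h \<in> heis n"
  shows "orbit_vec n a (heis_mult n g h) = amult n a (orbit_vec n a g) (orbit_vec n a h)"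
proof (rule eq_vecI)
  obtain w t where g: "g = (w,t)" and w: "w \<in> carrier_vec (2*n)" using assms by (auto simp: heis_def)
  obtain v s where h: "h = (v,s)" and v: "v \<in> carrier_vec (2*n)" using assms by (auto simp: heis_def)
  fix i assume "i < dim_vec (amult n a (orbit_vec n a g) (orbit_vec n a h))"
  then have "i < 2*n+2" by simp
  then show "orbit_vec n a (heis_mult n g h) $ i = amult n a (orbit_vec n a g) (orbit_vec n a h) $ i"
    using quad_add_omega[OF w v, of a] w v
    by (cases "i \<le> 2*n")
      (auto simp: orbit_vec_index amult_index bform_def heis_mult_def g h algebra_simps)
qed simp

lemma taut_rep_mult:
  "g \<in> heis n \<Longrightarrow> h \<in> heis n \<Longrightarrow> taut_rep n a (heis_mult n g h) = taut_rep n a g * taut_rep n a h"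
  by (simp add: taut_rep_def orbit_vec_mult lmul_mult[OF orbit_vec_carrier(1)])

lemma taut_rep_one: "taut_rep n a (heis_one n) = 1\<^sub>m (2*n+2)"
proof -
  have "orbit_vec n a (heis_one n) = unit_vec (2*n+2) 0"
    by (rule eq_vecI) (auto simp: orbit_vec_index heis_one_def quad_def)
  then show ?thesis unfolding taut_rep_def by (simp only: lmul_unit0)
qed

lemma det_taut_rep_nonzero:
  assumes g: "g \<in> heis n"
  shows "det (taut_rep n a g) \<noteq> 0"
proof -
  obtain w t where gw: "g = (w,t)" and w: "w \<in> carrier_vec (2*n)" using g by (auto simp: heis_def)
  have g': "(- w, - t) \<in> heis n" using w by (auto simp: heis_def)
  have "omega n w (- w) = 0"
    unfolding omega_def using w by (intro sum.neutral) auto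
  then have "heis_mult n g (- w, - t) = heis_one n"
    using w by (auto simp: heis_mult_def heis_one_def gw)
  then have "taut_rep n a g * taut_rep n a (- w, - t) = 1\<^sub>m (2*n+2)"
    using taut_rep_mult[OF g g', of a] taut_rep_one by simp
  then have "det (taut_rep n a g) * det (taut_rep n a (- w, - t)) = 1"
    by (metis det_mult det_one taut_rep_carrier(1))
  then show ?thesis by auto
qed

lemma taut_rep_index:
  "i < 2*n+2 \<Longrightarrow> j < 2*n+2 \<Longrightarrow> taut_rep n a g $$ (i,j) = lmul_entry n a (\<lambda>m. orbit_vec n a g $ m) i j"
  by (simp add: taut_rep_def lmul_def)

lemma orbit_poly_polyfun: "(\<lambda>X. orbit_poly n a m X) \<in> polyfun (2*n+1)"
proof -
  have var: "(\<lambda>X. X k) \<in> polyfun (Suc (2*n))" if "k < Suc (2*n)" for k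
    using that by (rule polyfun.pf_var)
  have sum: "(\<lambda>X. \<Sum>q<n. X q * X (n+q)) \<in> polyfun (Suc (2*n))"
    by (rule polyfun_sum) (auto intro!: polyfun.pf_mult var)
  consider "m = 0" | "1 \<le> m" "m \<le> 2*n" | "2*n < m" by linarith
  then show ?thesis
  proof cases
    case 3
    then show ?thesis
      using polyfun.pf_add[OF var[of "2*n"] polyfun_cmult[OF sum, of "a - 1/2"]] by (simp add: orbit_poly_def)
  qed (simp_all add: orbit_poly_def polyfun.pf_const var)
qed

lemma taut_rep_polyfun:
  assumes "i < 2*n+2" "j < 2*n+2"
  shows "\<exists>p\<in>polyfun (2*n+1). \<forall>g\<in>heis n. taut_rep n a g $$ (i,j) = p (heis_coords n g)"
proof
  show "(\<lambda>X. lmul_entry n a (\<lambda>m. orbit_poly n a m X) i j) \<in> polyfun (2*n+1)"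
    unfolding lmul_entry_def by (intro polyfun_if polyfun.pf_const polyfun_cmult orbit_poly_polyfun)
  show "\<forall>g\<in>heis n. taut_rep n a g $$ (i,j) = lmul_entry n a (\<lambda>m. orbit_poly n a m (heis_coords n g)) i j"
    using assms by (auto simp: taut_rep_index lmul_entry_def orbit_vec_def)
qed

lemma taut_rep_scalar_imp_one:
  assumes g: "g \<in> heis n" and scalar: "taut_rep n a g = c \<cdot>\<^sub>m 1\<^sub>m (2*n+2)"
  shows "g = heis_one n"
proof -
  obtain w t where gw: "g = (w,t)" and w: "w \<in> carrier_vec (2*n)" using g by (auto simp: heis_def)
  have "w $ q = 0" if q: "q < 2*n" for q
  proof -
    have "taut_rep n a g $$ (q+1, 0) = 0" using scalar q by simp
    then show ?thesis using q by (simp add: taut_rep_index lmul_entry_def orbit_vec_index gw)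
  qed
  then have w0: "w = 0\<^sub>v (2*n)" using w by (intro eq_vecI) auto
  have "taut_rep n a g $$ (2*n+1, 0) = 0" using scalar by simp
  then have "t = 0" by (simp add: taut_rep_index lmul_entry_def orbit_vec_index gw w0 quad_def)
  then show ?thesis by (simp add: gw w0 heis_one_def)
qed

lemma taut_rep_unit0: "taut_rep n a g *\<^sub>v unit_vec (2*n+2) 0 = orbit_vec n a g"
  unfolding taut_rep_def lmul_mult_vec[OF unit_vec_carrier] by (rule amult_unit0_right[OF orbit_vec_carrier(1)])

lemma taut_rep_orbit_unit0:
  assumes v: "v \<in> carrier_vec (2*n+2)"
  shows "(\<exists>g\<in>heis n. \<exists>c. c \<noteq> 0 \<and> v = c \<cdot>\<^sub>v (taut_rep n a g *\<^sub>v unit_vec (2*n+2) 0))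
    \<longleftrightarrow> v $ 0 \<noteq> 0"
  unfolding taut_rep_unit0
proof
  assume "\<exists>g\<in>heis n. \<exists>c. c \<noteq> 0 \<and> v = c \<cdot>\<^sub>v orbit_vec n a g"
  then show "v $ 0 \<noteq> 0" by (auto simp: orbit_vec_index)
next
  assume v0: "v $ 0 \<noteq> 0"
  define w where "w = vec (2*n) (\<lambda>q. v$(q+1) / v$0)"
  define t where "t = v$(2*n+1) / v$0 - (a - 1/2) * quad n w"
  have "v = v$0 \<cdot>\<^sub>v orbit_vec n a (w,t)"
  proof (rule eq_vecI)
    fix i assume "i < dim_vec (v$0 \<cdot>\<^sub>v orbit_vec n a (w,t))"
    then show "v $ i = (v$0 \<cdot>\<^sub>v orbit_vec n a (w,t)) $ i"
      using v0 by (cases "i = 2*n+1") (auto simp: orbit_vec_index w_def t_def)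
  qed (use v in simp)
  moreover have "(w,t) \<in> heis n" by (simp add: heis_def w_def)
  ultimately show "\<exists>g\<in>heis n. \<exists>c. c \<noteq> 0 \<and> v = c \<cdot>\<^sub>v orbit_vec n a g"
    using v0 by blast
qed

lemma H_structure_taut_rep: "H_structure n (taut_rep n a) (unit_vec (2*n+2) 0)"
  unfolding H_structure_def
proof (intro conjI ballI)
  show "\<exists>c. c \<noteq> 0 \<and> taut_rep n a (heis_mult n g h) = c \<cdot>\<^sub>m (taut_rep n a g * taut_rep n a h)"
    if "g \<in> heis n" "h \<in> heis n" for g h
    using that by (intro exI[of _ 1]) (simp add: taut_rep_mult smult_one_mat)
  show "\<exists>x\<in>carrier_vec (2*n+2). x \<noteq> 0\<^sub>v (2*n+2) \<and> (\<forall>v\<in>carrier_vec (2*n+2). v \<noteq> 0\<^sub>v (2*n+2) \<longrightarrow>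
      (\<exists>g\<in>heis n. \<exists>c. c \<noteq> 0 \<and> v = c \<cdot>\<^sub>v (taut_rep n a g *\<^sub>v x)) \<longleftrightarrow> unit_vec (2*n+2) 0 \<bullet> v \<noteq> 0)"
  proof (intro bexI[of _ "unit_vec (2*n+2) 0"] conjI ballI impI)
    fix v :: "complex vec" assume v: "v \<in> carrier_vec (2*n+2)"
    then have "unit_vec (2*n+2) 0 \<bullet> v = v $ 0" by simp
    then show "(\<exists>g\<in>heis n. \<exists>c. c \<noteq> 0 \<and> v = c \<cdot>\<^sub>v (taut_rep n a g *\<^sub>v unit_vec (2*n+2) 0))
        \<longleftrightarrow> unit_vec (2*n+2) 0 \<bullet> v \<noteq> 0"
      by (simp only: taut_rep_orbit_unit0[OF v])
  qed simp_all
  show "\<forall>i<2*n+2. \<forall>j<2*n+2. \<exists>p\<in>polyfun (2*n+1). \<forall>g\<in>heis n. taut_rep n a g $$ (i,j) = p (heis_coords n g)"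
    using taut_rep_polyfun by blast
qed (auto simp: det_taut_rep_nonzero taut_rep_scalar_imp_one)

section \<open>The structure defined by \<open>\<rho>\<^sub>a\<close> is tautological\<close>

lemma taut_rep_T_fixes_hyperplane:
  assumes v: "v \<in> carrier_vec (2*n+2)" and v0: "v $ 0 = 0"
  shows "taut_rep n a (heis_T n) *\<^sub>v v = v"
proof (rule eq_vecI)
  fix i assume "i < dim_vec v"
  then show "(taut_rep n a (heis_T n) *\<^sub>v v) $ i = v $ i"
    using v v0 by (cases "i = 2*n+1")
      (auto simp: taut_rep_def lmul_mult_vec amult_index orbit_vec_index heis_T_def quad_def bform_def)
qed (use v in \<open>simp add: taut_rep_def\<close>)

lemma taut_rep_centre:
  assumes pt: "pt \<in> carrier_vec (2*n+2)"
  shows "taut_rep n a (0\<^sub>v (2*n), s) *\<^sub>v pt = pt + (s * pt $ 0) \<cdot>\<^sub>v unit_vec (2*n+2) (2*n+1)"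
proof (rule eq_vecI)
  fix i assume "i < dim_vec (pt + (s * pt $ 0) \<cdot>\<^sub>v unit_vec (2*n+2) (2*n+1))"
  then show "(taut_rep n a (0\<^sub>v (2*n), s) *\<^sub>v pt) $ i = (pt + (s * pt $ 0) \<cdot>\<^sub>v unit_vec (2*n+2) (2*n+1)) $ i"
    using pt by (cases "i = 2*n+1")
      (auto simp: taut_rep_def lmul_mult_vec amult_index orbit_vec_index quad_def bform_def)
qed (use pt in \<open>simp add: taut_rep_def\<close>)

lemma centre_orbit_cone_taut_rep:
  assumes "pt \<in> carrier_vec (2*n+2)"
  shows "centre_orbit_cone n (taut_rep n a) pt
    = {c \<cdot>\<^sub>v (pt + (s * pt $ 0) \<cdot>\<^sub>v unit_vec (2*n+2) (2*n+1)) | c s. c \<noteq> 0}"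
  unfolding centre_orbit_cone_def taut_rep_centre[OF assms] ..

lemma smult_unit_last_in_boundary_reps:
  assumes pt: "pt \<in> carrier_vec (2*n+2)" and p0: "pt $ 0 \<noteq> 0" and d: "d \<noteq> 0"
  shows "d \<cdot>\<^sub>v unit_vec (2*n+2) (2*n+1) \<in> boundary_reps n (taut_rep n a) pt"
proof -
  let ?C = "centre_orbit_cone n (taut_rep n a) pt"
  let ?eL = "unit_vec (2*n+2) (2*n+1) :: complex vec"
  have "d \<cdot>\<^sub>v ?eL \<in> zariski_closure (2*n+2) ?C"
    unfolding zariski_closure_def
  proof (intro CollectI conjI ballI impI)
    fix f assume f: "f \<in> polyfun (2*n+2)" and vanish: "\<forall>y\<in>?C. f (\<lambda>i. y $ i) = 0"
    show "f (\<lambda>i. (d \<cdot>\<^sub>v ?eL) $ i) = 0"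
    proof (rule polyfun_eq_0_by_continuity[OF f, of "\<lambda>i. pt $ i"])
      fix e :: complex assume e: "e \<noteq> 0"
      let ?y = "e \<cdot>\<^sub>v (pt + (d / (e * pt $ 0) * pt $ 0) \<cdot>\<^sub>v ?eL)"
      have "?y \<in> ?C" unfolding centre_orbit_cone_taut_rep[OF pt] using e by blast
      moreover have "f (\<lambda>i. ?y $ i) = f (\<lambda>i. e * pt $ i + (d \<cdot>\<^sub>v ?eL) $ i)"
        using pt e p0 by (intro polyfun_cong[OF f]) (simp add: field_simps)
      ultimately show "f (\<lambda>i. e * pt $ i + (d \<cdot>\<^sub>v ?eL) $ i) = 0" using vanish by simp
    qed
  qed simp
  moreover have "d \<cdot>\<^sub>v ?eL \<notin> ?C"
    using pt p0 unfolding centre_orbit_cone_taut_rep[OF pt] by (auto dest!: arg_cong[where f = "\<lambda>v. v $ 0"])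
  moreover have "d \<cdot>\<^sub>v ?eL \<noteq> 0\<^sub>v (2*n+2)"
    using d by (auto dest!: arg_cong[where f = "\<lambda>v. v $ (2*n+1)"])
  ultimately show ?thesis by (simp add: boundary_reps_def)
qed

lemma boundary_rep_taut_rep_eq_smult_unit_last:
  assumes pt: "pt \<in> carrier_vec (2*n+2)" and p0: "pt $ 0 \<noteq> 0"
    and vh: "vh \<in> boundary_reps n (taut_rep n a) pt"
  shows "\<exists>d. d \<noteq> 0 \<and> vh = d \<cdot>\<^sub>v unit_vec (2*n+2) (2*n+1)"
proof -
  let ?C = "centre_orbit_cone n (taut_rep n a) pt"
  let ?eL = "unit_vec (2*n+2) (2*n+1) :: complex vec"
  have vc: "vh \<in> carrier_vec (2*n+2)" and nz: "vh \<noteq> 0\<^sub>v (2*n+2)" and nC: "vh \<notin> ?C"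
    and closure: "\<And>f. f \<in> polyfun (2*n+2) \<Longrightarrow> \<forall>y\<in>?C. f (\<lambda>i. y $ i) = 0 \<Longrightarrow> f (\<lambda>i. vh $ i) = 0"
    using vh unfolding boundary_reps_def zariski_closure_def by auto
  have ratio: "vh $ m * pt $ 0 = pt $ m * vh $ 0" if m: "1 \<le> m" "m \<le> 2*n" for m
  proof -
    let ?f = "\<lambda>X. X m * pt $ 0 + (- pt $ m) * X 0"
    have "?f \<in> polyfun (2*n+2)"
      using m by (intro polyfun.intros) simp_all
    moreover have "\<forall>y\<in>?C. ?f (\<lambda>i. y $ i) = 0"
      using m pt unfolding centre_orbit_cone_taut_rep[OF pt] by auto
    ultimately have "?f (\<lambda>i. vh $ i) = 0" by (rule closure)
    then show ?thesis by (simp add: algebra_simps)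
  qed
  have v0: "vh $ 0 = 0"
  proof (rule ccontr)
    assume v0: "vh $ 0 \<noteq> 0"
    define c where "c = vh $ 0 / pt $ 0"
    define s where "s = (vh $ (2*n+1) / c - pt $ (2*n+1)) / pt $ 0"
    have c: "c \<noteq> 0" using v0 p0 by (simp add: c_def)
    have "vh = c \<cdot>\<^sub>v (pt + (s * pt $ 0) \<cdot>\<^sub>v ?eL)"
    proof (rule eq_vecI)
      fix i assume "i < dim_vec (c \<cdot>\<^sub>v (pt + (s * pt $ 0) \<cdot>\<^sub>v ?eL))"
      then have i: "i < 2*n+2" using pt by simp
      consider "i = 0" | "1 \<le> i" "i \<le> 2*n" | "i = 2*n+1" using i by linarith
      then show "vh $ i = (c \<cdot>\<^sub>v (pt + (s * pt $ 0) \<cdot>\<^sub>v ?eL)) $ i"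
      proof cases
        case 2
        then show ?thesis using ratio[OF 2] pt p0 by (simp add: c_def field_simps)
      qed (use pt p0 c in \<open>simp_all add: c_def s_def field_simps\<close>)
    qed (use vc pt in simp)
    then have "vh \<in> ?C" unfolding centre_orbit_cone_taut_rep[OF pt] using c by blast
    then show False using nC by simp
  qed
  have eq: "vh = vh $ (2*n+1) \<cdot>\<^sub>v ?eL"
  proof (rule eq_vecI)
    fix i assume "i < dim_vec (vh $ (2*n+1) \<cdot>\<^sub>v ?eL)"
    then show "vh $ i = (vh $ (2*n+1) \<cdot>\<^sub>v ?eL) $ i"
      using v0 ratio[of i] p0 by (cases "i = 0"; cases "i = 2*n+1") auto
  qed (use vc in simp)
  moreover have "vh $ (2*n+1) \<noteq> 0"
  proof
    assume "vh $ (2*n+1) = 0"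
    then have "vh = 0\<^sub>v (2*n+2)"
      using vc by (subst eq) (auto intro!: eq_vecI)
    with nz show False ..
  qed
  ultimately show ?thesis by blast
qed

lemma boundary_reps_taut_rep:
  assumes "pt \<in> carrier_vec (2*n+2)" and "pt $ 0 \<noteq> 0"
  shows "boundary_reps n (taut_rep n a) pt = {d \<cdot>\<^sub>v unit_vec (2*n+2) (2*n+1) | d. d \<noteq> 0}"
  using smult_unit_last_in_boundary_reps[OF assms] boundary_rep_taut_rep_eq_smult_unit_last[OF assms]
  by blast

text \<open>The basis \<open>(d e\<^sub>L, e\<^sub>0, e\<^sub>1, \<dots>, e\<^sub>2\<^sub>n)\<close>, which starts with the boundary point.\<close>

definition shift_mat :: "nat \<Rightarrow> complex \<Rightarrow> complex mat" where
  "shift_mat n d = mat (2*n+2) (2*n+2)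
     (\<lambda>(i,j). if j = 0 then (if i = 2*n+1 then d else 0) else (if i = j - 1 then 1 else 0))"

definition shift_mat_inv :: "nat \<Rightarrow> complex \<Rightarrow> complex mat" where
  "shift_mat_inv n d = mat (2*n+2) (2*n+2)
     (\<lambda>(i,j). if i = 0 then (if j = 2*n+1 then 1/d else 0) else (if j = i - 1 then 1 else 0))"

lemma shift_mat_carrier [simp]:
  "shift_mat n d \<in> carrier_mat (2*n+2) (2*n+2)"
  "shift_mat n d \<in> carrier_mat (Suc (Suc (2*n))) (Suc (Suc (2*n)))"
  "shift_mat_inv n d \<in> carrier_mat (2*n+2) (2*n+2)"
  "shift_mat_inv n d \<in> carrier_mat (Suc (Suc (2*n))) (Suc (Suc (2*n)))"
  by (simp_all add: shift_mat_def shift_mat_inv_def)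

lemma shift_mat_mult_vec:
  assumes u: "u \<in> carrier_vec (2*n+2)"
  shows "shift_mat n d *\<^sub>v u = vec (2*n+2) (\<lambda>i. if i = 2*n+1 then d * u$0 else u$(i+1))"
proof (rule eq_vecI)
  fix i assume "i < dim_vec (vec (2*n+2) (\<lambda>i. if i = 2*n+1 then d * u$0 else u$(i+1)))"
  then have i: "i < 2*n+2" by simp
  have "(shift_mat n d *\<^sub>v u) $ i = (\<Sum>j\<in>{0..<2*n+2}.
      (if j = 0 then (if i = 2*n+1 then d else 0) else (if i = j - 1 then 1 else 0)) * u$j)"
    using i u by (simp add: shift_mat_def scalar_prod_def row_def)
  also have "\<dots> = (\<Sum>j\<in>{0..<2*n+2}.
      (if j = 0 then (if i = 2*n+1 then d * u$0 else 0) else 0) + (if j = i+1 then u$j else 0))"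
    by (rule sum.cong) auto
  finally show "(shift_mat n d *\<^sub>v u) $ i = vec (2*n+2) (\<lambda>i. if i = 2*n+1 then d * u$0 else u$(i+1)) $ i"
    using i by (auto simp: sum.distrib)
qed (simp add: shift_mat_def)

lemma shift_mat_inv_mult_vec:
  assumes u: "u \<in> carrier_vec (2*n+2)"
  shows "shift_mat_inv n d *\<^sub>v u = vec (2*n+2) (\<lambda>i. if i = 0 then u$(2*n+1) / d else u$(i-1))"
proof (rule eq_vecI)
  fix i assume "i < dim_vec (vec (2*n+2) (\<lambda>i. if i = 0 then u$(2*n+1) / d else u$(i-1)))"
  then have i: "i < 2*n+2" by simp
  have "(shift_mat_inv n d *\<^sub>v u) $ i = (\<Sum>j\<in>{0..<2*n+2}.
      (if i = 0 then (if j = 2*n+1 then 1/d else 0) else (if j = i - 1 then 1 else 0)) * u$j)"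
    using i u by (simp add: shift_mat_inv_def scalar_prod_def row_def)
  also have "\<dots> = (\<Sum>j\<in>{0..<2*n+2}.
      if j = (if i = 0 then 2*n+1 else i - 1) then (if i = 0 then u$j / d else u$j) else 0)"
    by (rule sum.cong) auto
  also have "\<dots> = (if i = 0 then u$(2*n+1) / d else u$(i-1))"
    unfolding sum.delta[OF finite_atLeastLessThan] using i by auto
  finally show "(shift_mat_inv n d *\<^sub>v u) $ i = vec (2*n+2) (\<lambda>i. if i = 0 then u$(2*n+1) / d else u$(i-1)) $ i"
    using i by simp
qed (simp add: shift_mat_inv_def)

lemma shift_mat_mult_inv:
  assumes d: "d \<noteq> 0"
  shows "shift_mat n d * shift_mat_inv n d = 1\<^sub>m (2*n+2)"
proof (rule mat_eqI_mult_vec[of _ "2*n+2" "2*n+2"])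
  fix v :: "complex vec" assume v: "v \<in> carrier_vec (2*n+2)"
  have "shift_mat n d * shift_mat_inv n d *\<^sub>v v = shift_mat n d *\<^sub>v (shift_mat_inv n d *\<^sub>v v)"
    by (rule assoc_mult_mat_vec[OF shift_mat_carrier(1) shift_mat_carrier(3) v])
  also have "\<dots> = v"
    unfolding shift_mat_inv_mult_vec[OF v] using d v by (subst shift_mat_mult_vec) (auto intro!: eq_vecI)
  finally show "shift_mat n d * shift_mat_inv n d *\<^sub>v v = 1\<^sub>m (2*n+2) *\<^sub>v v" using v by simp
qed (rule mult_carrier_mat[OF shift_mat_carrier(1) shift_mat_carrier(3)], simp)

lemma det_shift_mat_nonzero: "d \<noteq> 0 \<Longrightarrow> det (shift_mat n d) \<noteq> 0"
  by (metis det_mult det_one mult_zero_left shift_mat_carrier(1,3) shift_mat_mult_inv zero_neq_one)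

lemma shift_mat_unit_vec:
  "j < 2*n+2 \<Longrightarrow> shift_mat n d *\<^sub>v unit_vec (2*n+2) j =
    (if j = 0 then d \<cdot>\<^sub>v unit_vec (2*n+2) (2*n+1) else unit_vec (2*n+2) (j-1))"
  by (subst shift_mat_mult_vec) (auto intro!: eq_vecI)

lemma shift_conj_taut_rep_index:
  assumes i: "1 \<le> i" "i < 2*n+2" and j: "j < 2*n+2"
  shows "(shift_mat_inv n d * taut_rep n a g * shift_mat n d) $$ (i,j)
    = amult n a (orbit_vec n a g) (shift_mat n d *\<^sub>v unit_vec (2*n+2) j) $ (i-1)"
proof -
  let ?u = "shift_mat n d *\<^sub>v unit_vec (2*n+2) j"
  have "shift_mat_inv n d * taut_rep n a g * shift_mat n d \<in> carrier_mat (2*n+2) (2*n+2)"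
    by (rule mult_carrier_mat[OF mult_carrier_mat[OF shift_mat_carrier(3) taut_rep_carrier(1)]
          shift_mat_carrier(1)])
  have u: "?u \<in> carrier_vec (2*n+2)" by (rule mult_mat_vec_carrier[OF shift_mat_carrier(1) unit_vec_carrier])
  have "(shift_mat_inv n d * taut_rep n a g * shift_mat n d) $$ (i,j)
      = (shift_mat_inv n d * taut_rep n a g * shift_mat n d *\<^sub>v unit_vec (2*n+2) j) $ i"
    by (rule mult_mat_vec_unit_vec_index[symmetric, OF \<open>_ \<in> carrier_mat _ _\<close> i(2) j])
  also have "\<dots> = (shift_mat_inv n d *\<^sub>v (taut_rep n a g *\<^sub>v ?u)) $ i"
    unfolding assoc_mult_mat_vec[OF mult_carrier_mat[OF shift_mat_carrier(3) taut_rep_carrier(1)]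
        shift_mat_carrier(1) unit_vec_carrier] assoc_mult_mat_vec[OF shift_mat_carrier(3) taut_rep_carrier(1) u] ..
  also have "\<dots> = amult n a (orbit_vec n a g) ?u $ (i-1)"
    using i u by (simp add: taut_rep_def lmul_mult_vec shift_mat_inv_mult_vec[OF amult_carrier(1)])
  finally show ?thesis .
qed

lemma taut_rep_shift_conj:
  assumes d: "d \<noteq> 0" and g: "g \<in> heis n"
  shows "\<exists>M\<in>carrier_mat (2*n+2) (2*n+2). \<exists>c. c \<noteq> 0 \<and> taut_rep n a g * shift_mat n d = shift_mat n d * M \<and>
      (\<forall>i. 1 \<le> i \<and> i < 2*n+2 \<longrightarrow> M $$ (i, 0) = 0) \<and>
      (\<forall>i j. 1 \<le> i \<and> i < 2*n+2 \<and> 1 \<le> j \<and> j < 2*n+2 \<longrightarrow>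
         M $$ (i, j) = c * taut_mat n (1\<^sub>m (2*n) *\<^sub>v fst g) $$ (i - 1, j - 1))"
proof -
  obtain w t where gw: "g = (w,t)" and w: "w \<in> carrier_vec (2*n)" using g by (auto simp: heis_def)
  let ?M = "shift_mat_inv n d * taut_rep n a g * shift_mat n d"
  have M: "?M \<in> carrier_mat (2*n+2) (2*n+2)"
    by (rule mult_carrier_mat[OF mult_carrier_mat[OF shift_mat_carrier(3) taut_rep_carrier(1)]
          shift_mat_carrier(1)])
  have "shift_mat n d * ?M = (shift_mat n d * (shift_mat_inv n d * taut_rep n a g)) * shift_mat n d"
    by (rule assoc_mult_mat[symmetric, OF shift_mat_carrier(1)
          mult_carrier_mat[OF shift_mat_carrier(3) taut_rep_carrier(1)] shift_mat_carrier(1)])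
  also have "shift_mat n d * (shift_mat_inv n d * taut_rep n a g) = taut_rep n a g"
    unfolding assoc_mult_mat[symmetric, OF shift_mat_carrier(1) shift_mat_carrier(3) taut_rep_carrier(1)]
      shift_mat_mult_inv[OF d] by (rule left_mult_one_mat[OF taut_rep_carrier(1)])
  finally have conj: "taut_rep n a g * shift_mat n d = shift_mat n d * ?M" ..
  have col0: "?M $$ (i, 0) = 0" if "1 \<le> i" "i < 2*n+2" for i
    using that shift_mat_unit_vec[of 0 n d] by (auto simp: shift_conj_taut_rep_index amult_index)
  have taut: "?M $$ (i, j) = 1 * taut_mat n (1\<^sub>m (2*n) *\<^sub>v fst g) $$ (i - 1, j - 1)"
    if "1 \<le> i" "i < 2*n+2" "1 \<le> j" "j < 2*n+2" for i j
    using that w shift_mat_unit_vec[of j n d]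
    by (auto simp: shift_conj_taut_rep_index amult_index taut_mat_def orbit_vec_index gw)
  show ?thesis
    using M conj col0 taut by (intro bexI[of _ ?M] exI[of _ 1]) auto
qed

lemma induced_tautological_taut_rep:
  assumes d: "d \<noteq> 0"
  shows "induced_tautological n (taut_rep n a) (d \<cdot>\<^sub>v unit_vec (2*n+2) (2*n+1))"
proof -
  have col: "col (shift_mat n d) 0 = d \<cdot>\<^sub>v unit_vec (2*n+2) (2*n+1)"
    by (rule eq_vecI) (auto simp: shift_mat_def)
  show ?thesis
    unfolding induced_tautological_def
    by (rule bexI[of _ "shift_mat n d"], intro conjI taut_rep_shift_conj[OF d] bexI[of _ "1\<^sub>m (2*n)"] ballI)
      (simp_all add: det_shift_mat_nonzero[OF d] col)
qed

lemma tautological_algebra_taut_rep: "tautological_algebra n (assoc_algebra n (taut_rep n a))"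
proof -
  have "\<exists>c. taut_rep n a (heis_T n) *\<^sub>v v = c \<cdot>\<^sub>v v"
    if "v \<in> carrier_vec (2*n+2)" "unit_vec (2*n+2) 0 \<bullet> v = 0" for v
    using that taut_rep_T_fixes_hyperplane[of v n a] by (intro exI[of _ 1]) simp
  moreover have "boundary_reps n (taut_rep n a) pt \<noteq> {} \<and>
      (\<forall>vh\<in>boundary_reps n (taut_rep n a) pt. induced_tautological n (taut_rep n a) vh)"
    if "pt \<in> carrier_vec (2*n+2)" "unit_vec (2*n+2) 0 \<bullet> pt \<noteq> 0" for pt
    using that induced_tautological_taut_rep[of _ n a] by (auto simp: boundary_reps_taut_rep)
  ultimately show ?thesis
    unfolding tautological_algebra_def using H_structure_taut_rep by blast
qed

section \<open>An isomorphism invariant\<close>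

definition lmul_alg :: "nat \<Rightarrow> complex \<Rightarrow> complex mat set" where
  "lmul_alg n a = {lmul n a x | x. x \<in> carrier_vec (2*n+2)}"

lemma rep_in_assoc_algebra: "g \<in> heis n \<Longrightarrow> \<rho> g \<in> assoc_algebra n \<rho>"
  unfolding assoc_algebra_def by (intro gen_alg.ga_gen CollectI exI[of _ 1] exI[of _ g]) (simp add: smult_one_mat)

lemma lmul_in_lmul_alg: "x \<in> carrier_vec (2*n+2) \<Longrightarrow> lmul n a x \<in> lmul_alg n a"
  unfolding lmul_alg_def by blast

lemma lmul_algE:
  assumes "A \<in> lmul_alg n a"
  obtains x where "x \<in> carrier_vec (2*n+2)" "A = lmul n a x"
  using assms unfolding lmul_alg_def by blast

lemma assoc_algebra_taut_rep_subset: "assoc_algebra n (taut_rep n a) \<subseteq> lmul_alg n a"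
proof
  fix A assume "A \<in> assoc_algebra n (taut_rep n a)"
  then show "A \<in> lmul_alg n a"
    unfolding assoc_algebra_def
  proof (induction rule: gen_alg.induct)
    case ga_one
    show ?case
      unfolding lmul_unit0[symmetric, of n a] by (rule lmul_in_lmul_alg[OF unit_vec_carrier])
  next
    case (ga_gen A)
    then obtain c g where A: "A = c \<cdot>\<^sub>m taut_rep n a g" by blast
    show ?case
      unfolding A taut_rep_def lmul_smult[OF orbit_vec_carrier(1)] by (rule lmul_in_lmul_alg) simp
  next
    case (ga_add A B)
    then show ?case
      by (elim lmul_algE) (simp add: lmul_add lmul_in_lmul_alg)
  next
    case (ga_mult A B)
    then show ?case
      by (elim lmul_algE) (simp add: lmul_mult lmul_in_lmul_alg)
  next
    case (ga_smult A c)
    then show ?case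
      by (elim lmul_algE) (simp add: lmul_smult lmul_in_lmul_alg)
  qed
qed

lemma quad_unit_vec: "p < 2*n \<Longrightarrow> quad n (unit_vec (2*n) p) = 0"
  unfolding quad_def by (intro sum.neutral) auto

lemma lmul_unit_vec_in_assoc_algebra:
  assumes p: "1 \<le> p" "p \<le> 2*n"
  shows "lmul n a (unit_vec (2*n+2) p) \<in> assoc_algebra n (taut_rep n a)"
proof -
  let ?g = "(unit_vec (2*n) (p-1) :: complex vec, 0::complex)"
  have "taut_rep n a ?g + (-1) \<cdot>\<^sub>m 1\<^sub>m (2*n+2)
      = lmul n a (orbit_vec n a ?g) + lmul n a ((-1) \<cdot>\<^sub>v unit_vec (2*n+2) 0)"
    unfolding taut_rep_def lmul_smult[OF unit_vec_carrier, symmetric] lmul_unit0 ..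
  also have "\<dots> = lmul n a (orbit_vec n a ?g + (-1) \<cdot>\<^sub>v unit_vec (2*n+2) 0)"
    by (rule lmul_add) simp_all
  also have "orbit_vec n a ?g + (-1) \<cdot>\<^sub>v unit_vec (2*n+2) 0 = unit_vec (2*n+2) p"
    using p by (intro eq_vecI) (auto simp: orbit_vec_index quad_unit_vec)
  finally have eq: "taut_rep n a ?g + (-1) \<cdot>\<^sub>m 1\<^sub>m (2*n+2) = lmul n a (unit_vec (2*n+2) p)" .
  have "?g \<in> heis n" by (simp add: heis_def)
  then have "taut_rep n a ?g \<in> assoc_algebra n (taut_rep n a)" by (rule rep_in_assoc_algebra)
  then show ?thesis
    unfolding eq[symmetric] assoc_algebra_def by (intro gen_alg.ga_add gen_alg.ga_smult gen_alg.ga_one)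
qed

text \<open>\<open>0 \<cdot>\<^sub>m x\<close> is the zero matrix of the size of \<open>x\<close>.\<close>

definition skew_ratio :: "complex mat set \<Rightarrow> complex \<Rightarrow> bool" where
  "skew_ratio A \<mu> \<longleftrightarrow> (\<exists>x\<in>A. x*x*x = 0 \<cdot>\<^sub>m x \<and> (\<exists>y\<in>A. y*y*y = 0 \<cdot>\<^sub>m y \<and> x*y \<noteq> 0 \<cdot>\<^sub>m (x*y)) \<and>
      (\<forall>z\<in>A. z*z*z = 0 \<cdot>\<^sub>m z \<longrightarrow> x*z = \<mu> \<cdot>\<^sub>m (z*x)))"

lemma skew_ratio_alg_iso:
  assumes iso: "alg_iso N A B"
    and mult_closed: "\<And>x y. x \<in> A \<Longrightarrow> y \<in> A \<Longrightarrow> x * y \<in> A"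
    and smult_closed: "\<And>c x. x \<in> A \<Longrightarrow> c \<cdot>\<^sub>m x \<in> A"
    and ratio: "skew_ratio A \<mu>"
  shows "skew_ratio B \<mu>"
proof -
  obtain f where bij: "bij_betw f A B"
    and f_mult: "\<And>x y. x \<in> A \<Longrightarrow> y \<in> A \<Longrightarrow> f (x * y) = f x * f y"
    and f_smult: "\<And>c x. x \<in> A \<Longrightarrow> f (c \<cdot>\<^sub>m x) = c \<cdot>\<^sub>m f x"
    using iso unfolding alg_iso_def by blast
  have inj: "inj_on f A" and onto: "f ` A = B" using bij by (auto simp: bij_betw_def)
  have f_eq_iff: "f u = f v \<longleftrightarrow> u = v" if "u \<in> A" "v \<in> A" for u v
    using inj_on_eq_iff[OF inj that] .
  have f_cube: "f x * f x * f x = 0 \<cdot>\<^sub>m f x \<longleftrightarrow> x*x*x = 0 \<cdot>\<^sub>m x" if x: "x \<in> A" for x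
    using f_eq_iff[OF mult_closed[OF mult_closed[OF x x] x] smult_closed[OF x]]
    by (simp add: f_mult f_smult mult_closed x)
  obtain x y where x: "x \<in> A" "x*x*x = 0 \<cdot>\<^sub>m x" and y: "y \<in> A" "y*y*y = 0 \<cdot>\<^sub>m y"
    and xy: "x*y \<noteq> 0 \<cdot>\<^sub>m (x*y)" and skew: "\<And>z. z \<in> A \<Longrightarrow> z*z*z = 0 \<cdot>\<^sub>m z \<Longrightarrow> x*z = \<mu> \<cdot>\<^sub>m (z*x)"
    using ratio unfolding skew_ratio_def by blast
  have "f x * f y \<noteq> 0 \<cdot>\<^sub>m (f x * f y)"
    using xy f_eq_iff[OF mult_closed[OF x(1) y(1)] smult_closed[OF mult_closed[OF x(1) y(1)]]]
    by (simp add: f_mult f_smult mult_closed x y)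
  moreover have "f x * z' = \<mu> \<cdot>\<^sub>m (z' * f x)" if "z' \<in> B" "z'*z'*z' = 0 \<cdot>\<^sub>m z'" for z'
  proof -
    obtain z where z: "z \<in> A" and z': "z' = f z" using \<open>z' \<in> B\<close> onto by blast
    then have "x*z = \<mu> \<cdot>\<^sub>m (z*x)" using skew f_cube that(2) by simp
    then show ?thesis unfolding z' by (metis f_mult f_smult mult_closed x(1) z)
  qed
  ultimately show ?thesis
    unfolding skew_ratio_def using onto x y f_cube by blast
qed

lemma lmul_cube_eq_zero_iff:
  assumes x: "x \<in> carrier_vec (2*n+2)"
  shows "lmul n a x * lmul n a x * lmul n a x = 0 \<cdot>\<^sub>m lmul n a x \<longleftrightarrow> x $ 0 = 0"
proof -
  have "lmul n a x * lmul n a x * lmul n a x = 0 \<cdot>\<^sub>m lmul n a x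
      \<longleftrightarrow> amult n a (amult n a x x) x = 0 \<cdot>\<^sub>v x"
    using lmul_inj[OF amult_carrier(1) smult_carrier_vec[THEN iffD2, OF x]]
    by (auto simp: lmul_mult[OF x] lmul_smult[OF x])
  also have "\<dots> \<longleftrightarrow> x $ 0 = 0"
  proof
    assume "amult n a (amult n a x x) x = 0 \<cdot>\<^sub>v x"
    then have "amult n a (amult n a x x) x $ 0 = 0" using x by simp
    then show "x $ 0 = 0" by (simp add: amult_index)
  next
    assume x0: "x $ 0 = 0"
    then show "amult n a (amult n a x x) x = 0 \<cdot>\<^sub>v x"
      using x by (intro eq_vecI) (simp_all add: amult_index bform_amult_left)
  qed
  finally show ?thesis .
qed

lemma lmul_mult_nil:
  assumes "y \<in> carrier_vec (2*n+2)" "x $ 0 = 0" "y $ 0 = 0"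
  shows "lmul n a x * lmul n a y = lmul n a (bform n a x y \<cdot>\<^sub>v unit_vec (2*n+2) (2*n+1))"
  using assms by (simp add: lmul_mult amult_nil)

lemma lmul_smult_unit_last_eq_iff:
  "lmul n a (b \<cdot>\<^sub>v unit_vec (2*n+2) (2*n+1)) = c \<cdot>\<^sub>m lmul n a (b' \<cdot>\<^sub>v unit_vec (2*n+2) (2*n+1))
    \<longleftrightarrow> b = c * b'"
proof -
  have "lmul n a (b \<cdot>\<^sub>v unit_vec (2*n+2) (2*n+1)) = c \<cdot>\<^sub>m lmul n a (b' \<cdot>\<^sub>v unit_vec (2*n+2) (2*n+1))
      \<longleftrightarrow> b \<cdot>\<^sub>v unit_vec (2*n+2) (2*n+1) = (c * b') \<cdot>\<^sub>v (unit_vec (2*n+2) (2*n+1) :: complex vec)"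
    using lmul_inj[of "b \<cdot>\<^sub>v unit_vec (2*n+2) (2*n+1)" n "(c * b') \<cdot>\<^sub>v unit_vec (2*n+2) (2*n+1)" a]
    by (auto simp: lmul_smult smult_smult_assoc)
  also have "\<dots> \<longleftrightarrow> b = c * b'"
    by (auto dest: arg_cong[where f = "\<lambda>v. v $ (2*n+1)"])
  finally show ?thesis .
qed

lemma bform_unit_vec:
  assumes q: "q < n"
  shows "bform n a x (unit_vec (2*n+2) (n+q+1)) = a * x$(q+1)"
    and "bform n a (unit_vec (2*n+2) (n+q+1)) x = (a-1) * x$(q+1)"
    and "bform n a x (unit_vec (2*n+2) (q+1)) = (a-1) * x$(n+q+1)"
    and "bform n a (unit_vec (2*n+2) (q+1)) x = a * x$(n+q+1)"
  using q by (simp_all add: bform_def if_distrib[of "\<lambda>u. _ * u"] if_distrib[of "\<lambda>u. u * _"] cong: if_cong)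

lemma skew_ratio_assoc_algebra_taut_rep:
  assumes n: "n \<ge> 1" and a0: "a \<noteq> 0" and a1: "a \<noteq> 1"
  shows "skew_ratio (assoc_algebra n (taut_rep n a)) (a / (a - 1))"
proof -
  let ?A = "assoc_algebra n (taut_rep n a)"
  let ?eL = "unit_vec (2*n+2) (2*n+1) :: complex vec"
  let ?x = "lmul n a (unit_vec (2*n+2) 1)" and ?y = "lmul n a (unit_vec (2*n+2) (n+1))"
  have xy_in: "?x \<in> ?A" "?y \<in> ?A"
    using n lmul_unit_vec_in_assoc_algebra[of 1 n a] lmul_unit_vec_in_assoc_algebra[of "n+1" n a]
    by simp_all
  have xy_nil: "?x * ?x * ?x = 0 \<cdot>\<^sub>m ?x" "?y * ?y * ?y = 0 \<cdot>\<^sub>m ?y"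
    using n by (simp_all add: lmul_cube_eq_zero_iff)
  have "bform n a (unit_vec (2*n+2) 1) (unit_vec (2*n+2) (n+1)) = a"
    using bform_unit_vec(4)[of 0 n a "unit_vec (2*n+2) (n+1)"] n by simp
  then have "?x * ?y \<noteq> 0 \<cdot>\<^sub>m (?x * ?y)"
    using n a0 lmul_smult_unit_last_eq_iff[of n a a 0 a] by (simp add: lmul_mult_nil)
  moreover have "?x * z = (a / (a - 1)) \<cdot>\<^sub>m (z * ?x)" if z: "z \<in> ?A" "z * z * z = 0 \<cdot>\<^sub>m z" for z
  proof -
    obtain v where v: "v \<in> carrier_vec (2*n+2)" and zv: "z = lmul n a v"
      using z(1) assoc_algebra_taut_rep_subset by (blast elim: lmul_algE)
    then have v0: "v $ 0 = 0" using z(2) lmul_cube_eq_zero_iff by simp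
    have "bform n a (unit_vec (2*n+2) 1) v = (a / (a - 1)) * bform n a v (unit_vec (2*n+2) 1)"
      using bform_unit_vec(3,4)[of 0 n a v] n a1 by simp
    then show ?thesis
      using v v0 n lmul_smult_unit_last_eq_iff[of n a _ "a / (a - 1)"] by (simp add: zv lmul_mult_nil)
  qed
  ultimately show ?thesis
    unfolding skew_ratio_def using xy_in xy_nil by blast
qed

lemma skew_ratio_assoc_algebra_taut_rep_cases:
  assumes "skew_ratio (assoc_algebra n (taut_rep n a)) \<mu>"
  shows "a = \<mu> * (a - 1) \<or> a - 1 = \<mu> * a"
proof -
  let ?A = "assoc_algebra n (taut_rep n a)"
  have nil_vec: "\<exists>v. v \<in> carrier_vec (2*n+2) \<and> v $ 0 = 0 \<and> z = lmul n a v"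
    if "z \<in> ?A" "z * z * z = 0 \<cdot>\<^sub>m z" for z
    using that assoc_algebra_taut_rep_subset lmul_cube_eq_zero_iff by (blast elim: lmul_algE)
  obtain x y where x: "x \<in> ?A" "x*x*x = 0 \<cdot>\<^sub>m x" and y: "y \<in> ?A" "y*y*y = 0 \<cdot>\<^sub>m y"
    and xy: "x*y \<noteq> 0 \<cdot>\<^sub>m (x*y)" and skew: "\<And>z. z \<in> ?A \<Longrightarrow> z*z*z = 0 \<cdot>\<^sub>m z \<Longrightarrow> x*z = \<mu> \<cdot>\<^sub>m (z*x)"
    using assms unfolding skew_ratio_def by blast
  obtain xv where xv: "xv \<in> carrier_vec (2*n+2)" "xv $ 0 = 0" and xe: "x = lmul n a xv"
    using nil_vec[OF x] by blast
  obtain yv where yv: "yv \<in> carrier_vec (2*n+2)" "yv $ 0 = 0" and ye: "y = lmul n a yv"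
    using nil_vec[OF y] by blast
  have B: "bform n a xv yv \<noteq> 0"
    using xy xv yv lmul_smult_unit_last_eq_iff[of n a _ 0] by (simp add: xe ye lmul_mult_nil)
  have "\<exists>m. 1 \<le> m \<and> m \<le> 2*n \<and> xv $ m \<noteq> 0"
  proof (rule ccontr)
    assume "\<not> ?thesis"
    then have "xv $ (q+1) = 0" "xv $ (n+q+1) = 0" if "q < n" for q
      using that by auto
    then have "bform n a xv yv = 0" by (simp add: bform_def)
    with B show False ..
  qed
  then obtain m where m: "1 \<le> m" "m \<le> 2*n" and xm: "xv $ m \<noteq> 0" by blast
  have rel: "bform n a xv (unit_vec (2*n+2) p) = \<mu> * bform n a (unit_vec (2*n+2) p) xv"
    if p: "1 \<le> p" "p \<le> 2*n" for p
  proof -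
    have "x * lmul n a (unit_vec (2*n+2) p) = \<mu> \<cdot>\<^sub>m (lmul n a (unit_vec (2*n+2) p) * x)"
      using p by (intro skew lmul_unit_vec_in_assoc_algebra) (simp_all add: lmul_cube_eq_zero_iff)
    then show ?thesis
      using p xv lmul_smult_unit_last_eq_iff[of n a _ \<mu>] by (simp add: xe lmul_mult_nil)
  qed
  show ?thesis
  proof (cases "m \<le> n")
    case True
    obtain q where q: "q < n" "m = q + 1" using m True by (intro that[of "m - 1"]) auto
    have "a * xv $ m = \<mu> * ((a - 1) * xv $ m)"
      using rel[of "n+q+1"] q bform_unit_vec(1,2)[OF q(1)] by simp
    then have "a = \<mu> * (a - 1)" using xm by simp
    then show ?thesis ..
  next
    case False
    obtain q where q: "q < n" "m = n + q + 1" using m False by (intro that[of "m - n - 1"]) auto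
    have "(a - 1) * xv $ m = \<mu> * (a * xv $ m)"
      using rel[of "q+1"] q bform_unit_vec(3,4)[OF q(1)] by simp
    then have "a - 1 = \<mu> * a" using xm by simp
    then show ?thesis ..
  qed
qed

lemma alg_iso_refl: "alg_iso N A A"
  unfolding alg_iso_def by (intro exI[of _ id]) auto

lemma alg_iso_assoc_algebra_taut_rep_imp_eq:
  assumes n: "n \<ge> 1" and a: "a \<noteq> 0" "a \<noteq> 1" and ab: "a + b \<noteq> 1"
    and iso: "alg_iso (2*n+2) (assoc_algebra n (taut_rep n a)) (assoc_algebra n (taut_rep n b))"
  shows "a = b"
proof -
  have "skew_ratio (assoc_algebra n (taut_rep n b)) (a / (a - 1))"
    by (rule skew_ratio_alg_iso[OF iso _ _ skew_ratio_assoc_algebra_taut_rep[OF n a]])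
      (simp_all add: assoc_algebra_def gen_alg.ga_mult gen_alg.ga_smult)
  then have "b = a / (a - 1) * (b - 1) \<or> b - 1 = a / (a - 1) * b"
    by (rule skew_ratio_assoc_algebra_taut_rep_cases)
  then have "a = b \<or> a + b = 1"
    using a by (auto simp: field_simps)
  with ab show ?thesis by blast
qed

theorem proposition3p10:
  fixes n :: nat
  assumes "n \<ge> 1"
  shows "\<exists>S :: complex mat set set. infinite S \<and>
           (\<forall>A\<in>S. tautological_algebra n A) \<and>
           (\<forall>A\<in>S. \<forall>B\<in>S. A \<noteq> B \<longrightarrow> \<not> alg_iso (2*n+2) A B)"
proof -
  define alg where "alg k = assoc_algebra n (taut_rep n (of_nat (k + 2)))" for k
  have iso_imp_eq: "k = j" if "alg_iso (2*n+2) (alg k) (alg j)" for k j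
  proof -
    have "(of_nat (k + 2) :: complex) \<noteq> 0" "(of_nat (k + 2) :: complex) \<noteq> 1"
      "(of_nat (k + 2) + of_nat (j + 2) :: complex) \<noteq> 1"
      by (simp_all only: of_nat_add[symmetric] of_nat_eq_0_iff of_nat_eq_1_iff)
    then have "(of_nat (k + 2) :: complex) = of_nat (j + 2)"
      using that unfolding alg_def by (intro alg_iso_assoc_algebra_taut_rep_imp_eq[OF assms])
    then show ?thesis by (simp only: of_nat_eq_iff)
  qed
  then have "inj alg" by (metis alg_iso_refl injI)
  then have "infinite (range alg)" using finite_imageD[of alg UNIV] by auto
  moreover have "\<forall>A\<in>range alg. tautological_algebra n A"
    by (simp add: alg_def tautological_algebra_taut_rep)
  moreover have "\<forall>A\<in>range alg. \<forall>B\<in>range alg. A \<noteq> B \<longrightarrow> \<not> alg_iso (2*n+2) A B"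
    using iso_imp_eq by blast
  ultimately show ?thesis by blast
qed

end
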